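(* Let $A$ be an associative unital algebra over a field $k$ and $\delta$ a $k$-linear derivation of $A$ such that $\delta$ is locally nilpotent if $\mathrm{char}(k)=0$, and $\delta^p=0$ if $\mathrm{char}(k)=p>0$. Suppose $\delta(x)=1$ for some $x\in A$. Then $A^\delta$ is a left Ore domain if and only if $A$ is a critically compressible left $A[z;\delta]$-module.
   Context: $A^\delta=\ker\delta$. $A[z;\delta]$ is the differential operator ring ($A[z]$ as left $A$-module, $za=az+\delta(a)$), acting on $A$ by $(\sum_i a_iz^i)\cdot x=\sum_ia_i\delta^i(x)$; $\mathrm{End}_{A[z;\delta]}(A)\cong A^\delta$. A left Ore domain is a domain $S$ with $Sa\cap Sb\neq0$ for nonzero $a,b$. A nonzero module is critically compressible if it embeds into each of its nonzero submodules and into none of its factor modules $M/N$ with $N\neq0$. *)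

theory Defs
  imports Main
begin

text \<open>A k-algebra structure on the ring 'a: a unital ring homomorphism from the
field 'k into the centre of 'a.\<close>
definition algebra_map :: "('k::field \<Rightarrow> 'a::ring_1) \<Rightarrow> bool" where
  "algebra_map phi \<longleftrightarrow> phi 1 = 1 \<and> (\<forall>c d. phi (c + d) = phi c + phi d)
     \<and> (\<forall>c d. phi (c * d) = phi c * phi d) \<and> (\<forall>c a. phi c * a = a * phi c)"

definition k_derivation :: "('k::field \<Rightarrow> 'a::ring_1) \<Rightarrow> ('a \<Rightarrow> 'a) \<Rightarrow> bool" where
  "k_derivation phi \<delta> \<longleftrightarrow> (\<forall>a b. \<delta> (a + b) = \<delta> a + \<delta> b)
     \<and> (\<forall>c a. \<delta> (phi c * a) = phi c * \<delta> a)
     \<and> (\<forall>a b. \<delta> (a * b) = \<delta> a * b + a * \<delta> b)"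

definition locally_nilpotent :: "('a::zero \<Rightarrow> 'a) \<Rightarrow> bool" where
  "locally_nilpotent \<delta> \<longleftrightarrow> (\<forall>a. \<exists>n. (\<delta> ^^ n) a = 0)"

definition constants :: "('a::ring_1 \<Rightarrow> 'a) \<Rightarrow> 'a set" where
  "constants \<delta> = {a. \<delta> a = 0}"

text \<open>Elements of A[z;\<delta>] (i.e. A[z] as a left
  A-module) are represented by their coefficient lists.\<close>
definition dop_act :: "('a::ring_1 \<Rightarrow> 'a) \<Rightarrow> 'a list \<Rightarrow> 'a \<Rightarrow> 'a" where
  "dop_act \<delta> cs x = (\<Sum>i<length cs. cs ! i * (\<delta> ^^ i) x)"

definition dsubmodule :: "('a::ring_1 \<Rightarrow> 'a) \<Rightarrow> 'a set \<Rightarrow> bool" where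
  "dsubmodule \<delta> N \<longleftrightarrow> 0 \<in> N \<and> (\<forall>x\<in>N. \<forall>y\<in>N. x + y \<in> N) \<and> (\<forall>x\<in>N. - x \<in> N)
     \<and> (\<forall>cs. \<forall>x\<in>N. dop_act \<delta> cs x \<in> N)"

definition dhom :: "('a::ring_1 \<Rightarrow> 'a) \<Rightarrow> ('a \<Rightarrow> 'a) \<Rightarrow> bool" where
  "dhom \<delta> f \<longleftrightarrow> (\<forall>x y. f (x + y) = f x + f y)
     \<and> (\<forall>cs x. f (dop_act \<delta> cs x) = dop_act \<delta> cs (f x))"

definition embeds_into_sub :: "('a::ring_1 \<Rightarrow> 'a) \<Rightarrow> 'a set \<Rightarrow> bool" where
  "embeds_into_sub \<delta> N \<longleftrightarrow> (\<exists>f. dhom \<delta> f \<and> inj f \<and> range f \<subseteq> N)"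

text \<open>A embeds (as A[z;\<delta>]-module) into the factor module A/N.  A map A \<rightarrow> A/N is
  given by a map f choosing representatives: x \<mapsto> f x + N.\<close>
definition embeds_into_factor :: "('a::ring_1 \<Rightarrow> 'a) \<Rightarrow> 'a set \<Rightarrow> bool" where
  "embeds_into_factor \<delta> N \<longleftrightarrow> (\<exists>f.
       (\<forall>x y. f (x + y) - (f x + f y) \<in> N)
     \<and> (\<forall>cs x. f (dop_act \<delta> cs x) - dop_act \<delta> cs (f x) \<in> N)
     \<and> (\<forall>x. f x \<in> N \<longrightarrow> x = 0))"

definition critically_compressible :: "('a::ring_1 \<Rightarrow> 'a) \<Rightarrow> bool" where
  "critically_compressible \<delta> \<longleftrightarrow> (\<exists>a::'a. a \<noteq> 0)
     \<and> (\<forall>N. dsubmodule \<delta> N \<and> N \<noteq> {0} \<longrightarrow> embeds_into_sub \<delta> N)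
     \<and> (\<forall>N. dsubmodule \<delta> N \<and> N \<noteq> {0} \<longrightarrow> \<not> embeds_into_factor \<delta> N)"

definition left_Ore_domain :: "'a::ring_1 set \<Rightarrow> bool" where
  "left_Ore_domain S \<longleftrightarrow> (1::'a) \<noteq> 0
     \<and> (\<forall>a\<in>S. \<forall>b\<in>S. a * b = 0 \<longrightarrow> a = 0 \<or> b = 0)
     \<and> (\<forall>a\<in>S. \<forall>b\<in>S. a \<noteq> 0 \<longrightarrow> b \<noteq> 0 \<longrightarrow> (\<exists>s\<in>S. \<exists>t\<in>S. s * a = t * b \<and> s * a \<noteq> 0))"

end

theory Submission
  imports Defs "HOL-Computational_Algebra.Primes"
begin

(*
  Let d be a locally nilpotent derivation of a ring A and A^d its ring of constants.
  Two elementary facts drive the whole proof: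
  (i)  every nonzero element y has a nonzero constant among its iterates d^k y, so every
       nonzero A[z;d]-submodule of A contains a nonzero constant c, and then y \<mapsto> y c is a
       module endomorphism of A with image inside that submodule;
  (ii) if some w satisfies d^m w = 1 whenever d^m is not identically zero (for a
       k-algebra with d x = 1 take w = x^m / m!), then for every submodule N an element g
       with d g \<in> N is congruent modulo N to a constant.
  Using (i), critical compressibility forces right multiplication by nonzero constants to
  be injective (otherwise A embeds into A modulo an annihilator) and forces A^d to satisfy
  the left Ore condition (otherwise y \<mapsto> y b embeds A into A / A a).  Conversely, if A^d
  is a left Ore domain, (i) gives the embeddings into submodules and (ii) shows that an
  embedding A \<rightarrow> A/N would send 1 to a constant modulo N, which the Ore condition
  pushes into N.
*)

lemma left_Ore_domainD:
  fixes S :: "'a::ring_1 set"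
  assumes "left_Ore_domain S"
  shows "(1::'a) \<noteq> 0"
    and "a \<in> S \<Longrightarrow> b \<in> S \<Longrightarrow> a * b = 0 \<Longrightarrow> a = 0 \<or> b = 0"
    and "a \<in> S \<Longrightarrow> b \<in> S \<Longrightarrow> a \<noteq> 0 \<Longrightarrow> b \<noteq> 0 \<Longrightarrow> \<exists>s\<in>S. \<exists>t\<in>S. s * a = t * b \<and> s * a \<noteq> 0"
  using assms unfolding left_Ore_domain_def by blast+

lemma critically_compressible_nontrivial:
  "critically_compressible (d :: 'a::ring_1 \<Rightarrow> 'a) \<Longrightarrow> (1::'a) \<noteq> 0"
  unfolding critically_compressible_def by (metis mult_1_right mult_zero_right)

lemma critically_compressibleD:
  assumes "critically_compressible d" and "dsubmodule d N" "N \<noteq> {0}"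
  shows "\<exists>f. dhom d f \<and> inj f \<and> range f \<subseteq> N" and "\<not> embeds_into_factor d N"
  using assms unfolding critically_compressible_def embeds_into_sub_def by blast+

section \<open>Derivations of a ring\<close>

locale ring_derivation =
  fixes d :: "'a::ring_1 \<Rightarrow> 'a"
  assumes additive: "d (a + b) = d a + d b"
    and leibniz: "d (a * b) = d a * b + a * d b"
begin

lemma zero [simp]: "d 0 = 0"
  using additive[of 0 0] by simp

lemma minus: "d (- a) = - d a"
  using additive[of a "- a"] by (simp add: eq_neg_iff_add_eq_0 add.commute)

lemma diff: "d (a - b) = d a - d b"
  using additive[of a "- b"] minus by simp

lemma one: "d 1 = 0"
  using leibniz[of 1 1] by simp

lemma iter_zero [simp]: "(d ^^ n) 0 = 0"
  by (induct n) auto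

lemma iter_diff: "(d ^^ n) (a - b) = (d ^^ n) a - (d ^^ n) b"
  by (induct n) (auto simp: diff)

lemma iter_mult_constant: "d c = 0 \<Longrightarrow> (d ^^ n) (a * c) = (d ^^ n) a * c"
  by (induct n) (auto simp: leibniz)

lemma dop_act_mult_constant: "d c = 0 \<Longrightarrow> dop_act d cs (y * c) = dop_act d cs y * c"
  unfolding dop_act_def by (simp add: iter_mult_constant sum_distrib_right mult.assoc)

lemma of_nat_constant: "d (of_nat k) = 0"
  by (induct k) (simp_all add: additive one)

lemma iter_of_nat_mult: "(d ^^ n) (of_nat k * y) = of_nat k * (d ^^ n) y"
  by (induct n) (simp_all add: leibniz of_nat_constant)

lemma power_derivative: "d x = 1 \<Longrightarrow> d (x ^ Suc n) = of_nat (Suc n) * x ^ n"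
  by (induct n) (simp_all add: leibniz algebra_simps mult_of_nat_commute)

text \<open>If d x = 1 then d^n (x^n) = n!; this produces the divided powers x^n / n!.\<close>
lemma iter_power_self: "d x = 1 \<Longrightarrow> (d ^^ n) (x ^ n) = of_nat (fact n)"
proof (induct n)
  case (Suc n)
  have "(d ^^ Suc n) (x ^ Suc n) = (d ^^ n) (of_nat (Suc n) * x ^ n)"
    using power_derivative[OF Suc.prems] by (simp add: funpow_Suc_right del: funpow.simps)
  also have "\<dots> = of_nat (Suc n) * of_nat (fact n)"
    using Suc by (simp add: iter_of_nat_mult del: of_nat_Suc)
  finally show ?case by (simp only: fact_Suc of_nat_mult of_nat_id id_def)
qed simp

end

section \<open>Submodules of A over the differential operator ring\<close>

lemma dop_act_singleton: "dop_act d [a] y = a * y"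
  by (simp add: dop_act_def)

lemma dop_act_derivative: "dop_act d [0, 1] y = d y"
  by (simp add: dop_act_def numeral_2_eq_2)

lemma dsubmodule_zero: "dsubmodule d N \<Longrightarrow> 0 \<in> N"
  unfolding dsubmodule_def by blast

lemma dsubmodule_add: "dsubmodule d N \<Longrightarrow> n \<in> N \<Longrightarrow> m \<in> N \<Longrightarrow> n + m \<in> N"
  unfolding dsubmodule_def by blast

lemma dsubmodule_minus: "dsubmodule d N \<Longrightarrow> n \<in> N \<Longrightarrow> - n \<in> N"
  unfolding dsubmodule_def by blast

lemma dsubmodule_diff: "dsubmodule d N \<Longrightarrow> n \<in> N \<Longrightarrow> m \<in> N \<Longrightarrow> n - m \<in> N"
  using dsubmodule_add[of d N n "- m"] dsubmodule_minus by auto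

lemma dsubmodule_mult: "dsubmodule d N \<Longrightarrow> n \<in> N \<Longrightarrow> a * n \<in> N"
  unfolding dsubmodule_def by (metis dop_act_singleton)

lemma dsubmodule_derivative: "dsubmodule d N \<Longrightarrow> n \<in> N \<Longrightarrow> d n \<in> N"
  unfolding dsubmodule_def by (metis dop_act_derivative)

lemma dsubmodule_iter: "dsubmodule d N \<Longrightarrow> n \<in> N \<Longrightarrow> (d ^^ k) n \<in> N"
  by (induct k) (auto intro: dsubmodule_derivative)

lemma embeds_into_factor_by_dhom:
  assumes "dsubmodule d N" "dhom d f" "\<And>y. f y \<in> N \<Longrightarrow> y = 0"
  shows "embeds_into_factor d N"
proof -
  have "f (x + y) - (f x + f y) = 0" "f (dop_act d cs x) - dop_act d cs (f x) = 0" for x y cs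
    using assms(2) unfolding dhom_def by simp_all
  then show ?thesis using assms(3) dsubmodule_zero[OF assms(1)]
    unfolding embeds_into_factor_def by (intro exI[of _ f]) simp
qed

context ring_derivation
begin

lemma dhom_mult_constant: "d c = 0 \<Longrightarrow> dhom d (\<lambda>y. y * c)"
  unfolding dhom_def using dop_act_mult_constant by (simp add: distrib_right)

lemma dsubmodule_multiples: "d b = 0 \<Longrightarrow> dsubmodule d (range (\<lambda>y. y * b))"
  unfolding dsubmodule_def
proof (intro conjI ballI allI)
  assume b: "d b = 0"
  show "0 \<in> range (\<lambda>y. y * b)" by (rule range_eqI[of _ _ 0]) simp
  fix u v assume "u \<in> range (\<lambda>y. y * b)" "v \<in> range (\<lambda>y. y * b)"
  then obtain y z where "u = y * b" "v = z * b" by blast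
  then show "u + v \<in> range (\<lambda>y. y * b)"
    by (intro range_eqI[of _ _ "y + z"]) (simp add: distrib_right)
next
  fix u assume "u \<in> range (\<lambda>y. y * b)"
  then obtain y where "u = y * b" by blast
  then show "- u \<in> range (\<lambda>y. y * b)" by (intro range_eqI[of _ _ "- y"]) simp
next
  fix cs u assume b: "d b = 0" and "u \<in> range (\<lambda>y. y * b)"
  then obtain y where "u = y * b" by blast
  then show "dop_act d cs u \<in> range (\<lambda>y. y * b)"
    using dop_act_mult_constant[OF b] by (intro range_eqI[of _ _ "dop_act d cs y"]) simp
qed

lemma dsubmodule_annihilator: "d b = 0 \<Longrightarrow> dsubmodule d {y. y * b = 0}"
  unfolding dsubmodule_def
proof (intro conjI ballI allI)
  fix cs u assume "d b = 0" and "u \<in> {y. y * b = 0}"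
  then have "dop_act d cs u * b = dop_act d cs 0" by (simp flip: dop_act_mult_constant)
  then show "dop_act d cs u \<in> {y. y * b = 0}" by (simp add: dop_act_def)
qed (auto simp: distrib_right)

text \<open>If y b = 0 with b a nonzero constant and y \<noteq> 0, then an embedding A \<rightarrow> A b,
  f z = h z \<cdot> b, makes h an embedding of A into A modulo the nonzero annihilator of b.\<close>
lemma compressible_right_cancel:
  assumes C: "critically_compressible d" and b: "d b = 0" "b \<noteq> 0" and yb: "y * b = 0"
  shows "y = 0"
proof (rule ccontr)
  assume y: "y \<noteq> 0"
  let ?Ab = "range (\<lambda>y. y * b)" and ?Ann = "{y. y * b = 0}"
  have "b \<in> ?Ab" by (rule range_eqI[of _ _ 1]) simp
  then have "?Ab \<noteq> {0}" using b(2) by blast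
  then obtain f where f: "dhom d f" "inj f" "range f \<subseteq> ?Ab"
    using critically_compressibleD(1)[OF C dsubmodule_multiples[OF b(1)]] by blast
  define h where "h z = (SOME u. f z = u * b)" for z
  have f_eq: "f z = h z * b" for z
  proof -
    have "f z \<in> ?Ab" using f(3) by (rule subsetD[OF _ rangeI])
    then have "\<exists>u. f z = u * b" by blast
    then show ?thesis unfolding h_def by (rule someI_ex)
  qed
  have f_add: "f (u + v) = f u + f v" and f_dop: "f (dop_act d cs u) = dop_act d cs (f u)"
    for u v cs using f(1) unfolding dhom_def by blast+
  have "embeds_into_factor d ?Ann"
    unfolding embeds_into_factor_def
  proof (intro exI[of _ h] conjI allI impI)
    fix u v
    show "h (u + v) - (h u + h v) \<in> ?Ann"
      using f_add[of u v] by (simp add: f_eq left_diff_distrib distrib_right)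
  next
    fix cs u
    show "h (dop_act d cs u) - dop_act d cs (h u) \<in> ?Ann"
      using f_dop[of cs u] by (simp add: f_eq left_diff_distrib dop_act_mult_constant[OF b(1)])
  next
    fix u assume "h u \<in> ?Ann"
    then have "f u = f 0" using f_eq f_add[of 0 0] by simp
    then show "u = 0" using f(2) by (simp add: inj_eq)
  qed
  moreover have "?Ann \<noteq> {0}" using yb y by blast
  ultimately show False
    using critically_compressibleD(2)[OF C dsubmodule_annihilator[OF b(1)]] by blast
qed

end

section \<open>Locally nilpotent derivations\<close>

locale lnd = ring_derivation +
  assumes locally_nilpotent: "\<exists>n. (d ^^ n) a = 0"
begin

lemma last_nonzero_iterate:
  assumes "y \<noteq> 0"
  shows "\<exists>k. (d ^^ k) y \<noteq> 0 \<and> d ((d ^^ k) y) = 0"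
proof -
  obtain n where "(d ^^ n) y = 0" using locally_nilpotent by blast
  then show ?thesis
  proof (induct n)
    case (Suc n)
    then show ?case by (cases "(d ^^ n) y = 0") auto
  qed (use assms in simp)
qed

lemma dsubmodule_has_constant:
  assumes N: "dsubmodule d N" and "N \<noteq> {0}"
  shows "\<exists>c\<in>N. c \<noteq> 0 \<and> d c = 0"
proof -
  obtain n where n: "n \<in> N" "n \<noteq> 0" using assms dsubmodule_zero[OF N] by blast
  then obtain k where "(d ^^ k) n \<noteq> 0" "d ((d ^^ k) n) = 0" using last_nonzero_iterate by blast
  then show ?thesis using dsubmodule_iter[OF N n(1), of k] by (intro bexI[of _ "(d ^^ k) n"]) simp_all
qed

text \<open>In a left Ore domain of constants, nonzero constants are right non-zero-divisors in A:
  if y c = 0 then the last nonzero iterate of y times c vanishes.\<close>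
lemma Ore_right_cancel:
  assumes L: "left_Ore_domain (constants d)" and c: "d c = 0" "c \<noteq> 0" and yc: "y * c = 0"
  shows "y = 0"
proof (rule ccontr)
  assume "y \<noteq> 0"
  then obtain k where k: "(d ^^ k) y \<noteq> 0" "d ((d ^^ k) y) = 0"
    using last_nonzero_iterate by blast
  have "(d ^^ k) y * c = 0" using yc iter_mult_constant[OF c(1), of k y] by simp
  moreover have "(d ^^ k) y \<in> constants d" "c \<in> constants d"
    using k(2) c(1) by (simp_all add: constants_def)
  ultimately have "(d ^^ k) y = 0 \<or> c = 0" using left_Ore_domainD(2)[OF L] by blast
  then show False using k(1) c(2) by blast
qed

text \<open>A nonzero constant c in a nonzero submodule N gives the embedding y \<mapsto> y c of A into N.\<close>
lemma Ore_embeds_into_submodule: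
  assumes L: "left_Ore_domain (constants d)" and N: "dsubmodule d N" "N \<noteq> {0}"
  shows "embeds_into_sub d N"
proof -
  obtain c where cN: "c \<in> N" and c: "c \<noteq> 0" "d c = 0"
    using dsubmodule_has_constant[OF N] by blast
  have "inj (\<lambda>y. y * c)"
  proof (rule injI)
    fix y z assume "y * c = z * c"
    then have "(y - z) * c = 0" by (simp add: left_diff_distrib)
    then have "y - z = 0" by (rule Ore_right_cancel[OF L c(2) c(1)])
    then show "y = z" by simp
  qed
  then show ?thesis unfolding embeds_into_sub_def
    using dhom_mult_constant[OF c(2)] dsubmodule_mult[OF N(1) cN] by blast
qed

text \<open>If A^d failed the left Ore condition at nonzero constants a, b, i.e. A a \<inter> A b = 0,
  then y \<mapsto> y b would embed A into A / A a.  Common nonzero multiples u a = v b are moved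
  into A^d by applying d until the last nonzero iterate.\<close>
lemma compressible_imp_Ore:
  assumes C: "critically_compressible d"
  shows "left_Ore_domain (constants d)"
proof -
  have cancel: "\<And>b y. d b = 0 \<Longrightarrow> b \<noteq> 0 \<Longrightarrow> y * b = 0 \<Longrightarrow> y = 0"
    using compressible_right_cancel[OF C] by blast
  have Ore: "\<exists>s\<in>constants d. \<exists>t\<in>constants d. s * a = t * b \<and> s * a \<noteq> 0"
    if a: "d a = 0" "a \<noteq> 0" and b: "d b = 0" "b \<noteq> 0" for a b
  proof (cases "\<exists>u v. u * a = v * b \<and> u * a \<noteq> 0")
    case True
    then obtain u v where uv: "u * a = v * b" "u * a \<noteq> 0" by blast
    then obtain k where k: "(d ^^ k) (u * a) \<noteq> 0" "d ((d ^^ k) (u * a)) = 0"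
      using last_nonzero_iterate by blast
    have ua: "(d ^^ k) (u * a) = (d ^^ k) u * a" by (rule iter_mult_constant[OF a(1)])
    have vb: "(d ^^ k) (u * a) = (d ^^ k) v * b" using uv(1) iter_mult_constant[OF b(1)] by simp
    have "d ((d ^^ k) u) = 0" using k(2) ua cancel[OF a] by (simp add: leibniz a(1))
    moreover have "d ((d ^^ k) v) = 0" using k(2) vb cancel[OF b] by (simp add: leibniz b(1))
    moreover have "(d ^^ k) u * a = (d ^^ k) v * b" "(d ^^ k) u * a \<noteq> 0" using ua vb k(1) by simp_all
    ultimately show ?thesis unfolding constants_def by blast
  next
    case False
    let ?Aa = "range (\<lambda>y. y * a)"
    have N: "dsubmodule d ?Aa" by (rule dsubmodule_multiples[OF a(1)])
    have "a \<in> ?Aa" by (rule range_eqI[of _ _ 1]) simp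
    then have "?Aa \<noteq> {0}" using a(2) by blast
    moreover have "embeds_into_factor d ?Aa"
    proof (rule embeds_into_factor_by_dhom[OF N dhom_mult_constant[OF b(1)]])
      fix y assume "y * b \<in> ?Aa"
      then have "y * b = 0" using False by (metis rangeE)
      then show "y = 0" using cancel[OF b] by blast
    qed
    ultimately show ?thesis using critically_compressibleD(2)[OF C N] by blast
  qed
  show ?thesis
    unfolding left_Ore_domain_def
    using critically_compressible_nontrivial[OF C] cancel Ore unfolding constants_def by blast
qed

end

section \<open>Derivations with divided powers\<close>

locale lnd_divided_powers = lnd +
  assumes divided_power: "(d ^^ m) a \<noteq> 0 \<Longrightarrow> \<exists>w. (d ^^ m) w = 1"
begin

text \<open>Induction on m: the
  constant e = d^m g lies in N (for m > 0), and subtracting w e with d^m w = 1 lowers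
  the nilpotency order while keeping d g in N.\<close>
lemma congruent_to_constant_bounded:
  assumes N: "dsubmodule d N"
  shows "d g \<in> N \<Longrightarrow> (d ^^ Suc m) g = 0 \<Longrightarrow> \<exists>c. d c = 0 \<and> g - c \<in> N"
proof (induct m arbitrary: g)
  case 0
  then show ?case using dsubmodule_zero[OF N] by (intro exI[of _ g]) simp
next
  case (Suc m)
  define e where "e = (d ^^ Suc m) g"
  show ?case
  proof (cases "e = 0")
    case True
    then show ?thesis using Suc unfolding e_def by blast
  next
    case False
    then obtain w where w: "(d ^^ Suc m) w = 1" using divided_power unfolding e_def by blast
    have de: "d e = 0" using Suc.prems(2) unfolding e_def by simp
    have eN: "e \<in> N" unfolding e_def
      using dsubmodule_iter[OF N Suc.prems(1), of m] by (simp add: funpow_Suc_right del: funpow.simps)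
    have weN: "w * e \<in> N" by (rule dsubmodule_mult[OF N eN])
    have "d (g - w * e) = d g - d w * e" by (simp add: diff leibniz de)
    then have "d (g - w * e) \<in> N" using dsubmodule_diff[OF N Suc.prems(1) dsubmodule_mult[OF N eN]] by simp
    moreover have "(d ^^ Suc m) (g - w * e) = 0"
    proof -
      have "(d ^^ Suc m) (g - w * e) = (d ^^ Suc m) g - (d ^^ Suc m) w * e"
        by (simp only: iter_diff iter_mult_constant[OF de])
      also have "\<dots> = e - 1 * e" by (simp only: w e_def)
      finally show ?thesis by simp
    qed
    ultimately obtain c where c: "d c = 0" "g - w * e - c \<in> N" using Suc.hyps by blast
    have "g - c = (g - w * e - c) + w * e" by (simp add: algebra_simps)
    then have "g - c \<in> N" using dsubmodule_add[OF N c(2) weN] by (simp only:)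
    then show ?thesis using c(1) by blast
  qed
qed

lemma congruent_to_constant:
  assumes "dsubmodule d N" "d g \<in> N"
  shows "\<exists>c. d c = 0 \<and> g - c \<in> N"
proof -
  obtain n where "(d ^^ n) g = 0" using locally_nilpotent by blast
  then have "(d ^^ Suc n) g = 0" by simp
  then show ?thesis using congruent_to_constant_bounded assms by blast
qed

text \<open>An embedding h of A into A/N: g = h 1 satisfies d g \<equiv> h (d 1) = h 0 \<equiv> 0, so g is
  congruent to a constant c0.  If c0 = 0 then h 1 \<in> N; otherwise the Ore condition gives
  s c0 = t c with c a nonzero constant of N, whence h s \<equiv> s g \<equiv> t c \<in> N although s \<noteq> 0.\<close>
lemma Ore_not_embeds_into_factor:
  assumes L: "left_Ore_domain (constants d)" and N: "dsubmodule d N" "N \<noteq> {0}"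
  shows "\<not> embeds_into_factor d N"
proof
  assume "embeds_into_factor d N"
  then obtain h where h_add: "\<And>u v. h (u + v) - (h u + h v) \<in> N"
    and h_dop: "\<And>cs u. h (dop_act d cs u) - dop_act d cs (h u) \<in> N"
    and h_inj: "\<And>u. h u \<in> N \<Longrightarrow> u = 0"
    unfolding embeds_into_factor_def by blast
  define g where "g = h 1"
  have h0: "h 0 \<in> N" using dsubmodule_minus[OF N(1) h_add[of 0 0]] by simp
  have h_mult: "h a - a * g \<in> N" for a
    using h_dop[of "[a]" 1] unfolding g_def by (simp add: dop_act_singleton)
  have "h 0 - d g \<in> N"
    using h_dop[of "[0, 1]" 1] unfolding g_def by (simp add: dop_act_derivative one)
  then have "d g \<in> N" using dsubmodule_diff[OF N(1) h0] by fastforce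
  then obtain c0 where c0: "d c0 = 0" "g - c0 \<in> N" using congruent_to_constant[OF N(1)] by blast
  obtain c where cN: "c \<in> N" and c: "c \<noteq> 0" "d c = 0" using dsubmodule_has_constant[OF N] by blast
  show False
  proof (cases "c0 = 0")
    case True
    then have "h 1 \<in> N" using c0(2) unfolding g_def by simp
    then have "(1::'a) = 0" by (rule h_inj)
    then show False using left_Ore_domainD(1)[OF L] by blast
  next
    case False
    moreover have "c0 \<in> constants d" "c \<in> constants d" using c0(1) c(2) by (simp_all add: constants_def)
    ultimately obtain s t where st: "s * c0 = t * c" "s * c0 \<noteq> 0"
      using left_Ore_domainD(3)[OF L] c(1) by blast
    have "s * g = s * (g - c0) + t * c" using st(1) by (simp add: right_diff_distrib)
    then have "s * g \<in> N"
      using dsubmodule_add[OF N(1) dsubmodule_mult[OF N(1) c0(2)] dsubmodule_mult[OF N(1) cN]] by simp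
    then have "(h s - s * g) + s * g \<in> N" by (rule dsubmodule_add[OF N(1) h_mult[of s]])
    then have "h s \<in> N" by simp
    then have "s = 0" by (rule h_inj)
    then show False using st(2) by simp
  qed
qed

theorem Ore_iff_compressible:
  "left_Ore_domain (constants d) \<longleftrightarrow> critically_compressible d"
proof
  assume L: "left_Ore_domain (constants d)"
  then have "(1::'a) \<noteq> 0" by (rule left_Ore_domainD(1))
  then show "critically_compressible d"
    unfolding critically_compressible_def
    using Ore_embeds_into_submodule[OF L] Ore_not_embeds_into_factor[OF L] by blast
qed (rule compressible_imp_Ore)

end

section \<open>Algebras over a field with a derivation satisfying d x = 1\<close>

lemma algebra_map_of_nat:
  assumes "algebra_map phi"
  shows "phi (of_nat n) = of_nat n"
proof -
  have add: "phi (c + e) = phi c + phi e" and one: "phi 1 = 1" for c e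
    using assms unfolding algebra_map_def by blast+
  have "phi 0 = 0" using add[of 0 0] by simp
  then show ?thesis by (induct n) (simp_all add: add one)
qed

text \<open>Under the nilpotency hypotheses of the corollary, m! is invertible in k as long as d^m
  does not vanish identically: in characteristic p, p divides m! only if m \<ge> p.\<close>
lemma fact_nonzero_if_iterate_nonzero:
  fixes \<delta> :: "'a::zero \<Rightarrow> 'a"
  assumes "CHAR('k::field) > 0 \<longrightarrow> (\<forall>a. (\<delta> ^^ CHAR('k)) a = 0)" and "(\<delta> ^^ m) a \<noteq> 0"
  shows "(of_nat (fact m) :: 'k) \<noteq> 0"
proof
  assume "(of_nat (fact m) :: 'k) = 0"
  then have dvd: "CHAR('k) dvd fact m" by (simp add: of_nat_eq_0_iff_char_dvd)
  then have p: "CHAR('k) > 0" by (auto intro: Nat.gr0I)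
  then have "CHAR('k) \<le> m" using dvd prime_dvd_fact_iff prime_CHAR_semidom by blast
  then have "(\<delta> ^^ m) a = (\<delta> ^^ CHAR('k)) ((\<delta> ^^ (m - CHAR('k))) a)"
    by (simp flip: funpow_add[unfolded o_def, THEN fun_cong])
  then show False using assms p by simp
qed

lemma divided_power_of_slice:
  fixes phi :: "'k::field \<Rightarrow> 'a::ring_1"
  assumes am: "algebra_map phi" and kd: "k_derivation phi \<delta>" and x: "\<delta> x = 1"
    and F: "(of_nat (fact m) :: 'k) \<noteq> 0"
  shows "(\<delta> ^^ m) (phi (inverse (of_nat (fact m))) * x ^ m) = 1"
proof -
  have "ring_derivation \<delta>"
    using kd unfolding k_derivation_def ring_derivation_def by blast
  have "\<delta> (phi c * a) = phi c * \<delta> a" for c a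
    using kd unfolding k_derivation_def by blast
  then have linear: "(\<delta> ^^ n) (phi c * a) = phi c * (\<delta> ^^ n) a" for n c a
    by (induct n) simp_all
  have phi_mult: "phi (c * e) = phi c * phi e" and phi_one: "phi 1 = 1" for c e
    using am unfolding algebra_map_def by blast+
  have "(\<delta> ^^ m) (phi (inverse (of_nat (fact m))) * x ^ m)
      = phi (inverse (of_nat (fact m))) * (\<delta> ^^ m) (x ^ m)"
    by (rule linear)
  also have "\<dots> = phi (inverse (of_nat (fact m))) * phi (of_nat (fact m))"
    using ring_derivation.iter_power_self[OF \<open>ring_derivation \<delta>\<close> x] algebra_map_of_nat[OF am]
    by simp
  also have "\<dots> = phi (inverse (of_nat (fact m)) * of_nat (fact m))"
    by (rule phi_mult[symmetric])
  also have "\<dots> = 1" using F phi_one by simp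
  finally show ?thesis .
qed

theorem corollary3p11:
  fixes phi :: "'k::field \<Rightarrow> 'a::ring_1" and \<delta> :: "'a \<Rightarrow> 'a" and x :: 'a
  assumes "algebra_map phi"
    and "k_derivation phi \<delta>"
    and "CHAR('k) = 0 \<longrightarrow> locally_nilpotent \<delta>"
    and "CHAR('k) > 0 \<longrightarrow> (\<forall>a. (\<delta> ^^ CHAR('k)) a = 0)"
    and "\<delta> x = 1"
  shows "left_Ore_domain (constants \<delta>) \<longleftrightarrow> critically_compressible \<delta>"
proof -
  have nilpotent: "\<exists>n. (\<delta> ^^ n) a = 0" for a
    using assms(3,4) unfolding locally_nilpotent_def by (cases "CHAR('k) = 0") auto
  have divided_powers: "\<exists>w. (\<delta> ^^ m) w = 1" if "(\<delta> ^^ m) a \<noteq> 0" for m a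
    using divided_power_of_slice[OF assms(1,2,5) fact_nonzero_if_iterate_nonzero[OF assms(4) that]]
    by (rule exI)
  have "ring_derivation \<delta>"
    using assms(2) unfolding k_derivation_def ring_derivation_def by blast
  then have "lnd_divided_powers \<delta>"
    unfolding lnd_divided_powers_def lnd_divided_powers_axioms_def lnd_def lnd_axioms_def
    using nilpotent divided_powers by blast
  then show ?thesis by (rule lnd_divided_powers.Ore_iff_compressible)
qed

end
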